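(* Let $s_1,\dots,s_n\in\mathbb R^2$ satisfy $\|s_i-s_j\|\ge h$ for all $i\ne j$, for a fixed $h>0$. Let $\bar{\boldsymbol\Sigma}$ be the matrix $\bar{\boldsymbol\Sigma}_{ij}=C(\|s_i-s_j\|\mid\sigma^2,\phi,\nu)+\tau^2I(i=j)$ from a Matérn covariance with parameters $(\sigma^2,\phi,\nu,\tau^2)$, and let $\mathbf Q$ be the NNGP precision matrix derived from $\bar{\boldsymbol\Sigma}$ using neighbor sets $N(i)\subseteq\{1,\dots,i-1\}$ of size at most $m$ ($m$-nearest neighbors), chosen so that each location $s_i$ appears in the neighbor sets of at most $M$ locations. Then the maximum eigenvalue of $\mathbf Q$ has an upper bound that is uniform in $n$.
   Context: Matérn covariance: $C(d\mid\sigma^2,\phi,\nu)=\frac{2^{1-\nu}\sigma^2(\sqrt2\phi d)^\nu}{\Gamma(\nu)}\mathcal K_\nu(\sqrt2\phi d)$, $C(0)=\sigma^2$. NNGP precision: $\mathbf B$ strictly lower triangular with $\mathbf B_{i,N(i)}=\bar{\boldsymbol\Sigma}(i,N(i))\bar{\boldsymbol\Sigma}(N(i),N(i))^{-1}$ and zero elsewhere; $\mathbf F$ diagonal with $\mathbf F_{ii}=\bar{\boldsymbol\Sigma}_{ii}-\bar{\boldsymbol\Sigma}(i,N(i))\bar{\boldsymbol\Sigma}(N(i),N(i))^{-1}\bar{\boldsymbol\Sigma}(N(i),i)$; $\mathbf Q=(\mathbf I-\mathbf B)^\top\mathbf F^{-1}(\mathbf I-\mathbf B)$. *)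

theory Defs
  imports "HOL-Analysis.Analysis" "Jordan_Normal_Form.Char_Poly" "Jordan_Normal_Form.DL_Submatrix"
    "Jordan_Normal_Form.Gauss_Jordan_Elimination"
begin

definition besselK :: "real \<Rightarrow> real \<Rightarrow> real" where
  "besselK \<nu> x = integral {0..} (\<lambda>t. exp (- x * cosh t) * cosh (\<nu> * t))"

definition matern :: "real \<Rightarrow> real \<Rightarrow> real \<Rightarrow> real \<Rightarrow> real" where
  "matern \<sigma>2 \<phi> \<nu> d =
     (if d = 0 then \<sigma>2
      else 2 powr (1 - \<nu>) * \<sigma>2 * (sqrt 2 * \<phi> * d) powr \<nu> / Gamma \<nu>
           * besselK \<nu> (sqrt 2 * \<phi> * d))"

text \<open>Covariance matrix with nugget: Sigma_bar(i,j) = C(||s_i - s_j||) + tau2 [i=j].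
  Indices are 0-based: locations s 0, ..., s (n-1).\<close>
definition Sigma_bar :: "real \<Rightarrow> real \<Rightarrow> real \<Rightarrow> real \<Rightarrow> nat \<Rightarrow> (nat \<Rightarrow> real^2) \<Rightarrow> real Matrix.mat" where
  "Sigma_bar \<sigma>2 \<phi> \<nu> \<tau>2 n s =
     Matrix.mat n n (\<lambda>(i,j). matern \<sigma>2 \<phi> \<nu> (dist (s i) (s j)) + (if i = j then \<tau>2 else 0))"

definition minv :: "real Matrix.mat \<Rightarrow> real Matrix.mat" where
  "minv A = (case mat_inverse A of Some B \<Rightarrow> B | None \<Rightarrow> 0\<^sub>m (dim_row A) (dim_row A))"

text \<open>Regression row  Sigma(i,N(i)) Sigma(N(i),N(i))^{-1}  (a 1 x |N(i)| matrix whose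
  columns are indexed by N(i) in increasing order).\<close>
definition nngp_w :: "real Matrix.mat \<Rightarrow> (nat \<Rightarrow> nat set) \<Rightarrow> nat \<Rightarrow> real Matrix.mat" where
  "nngp_w S N i = submatrix S {i} (N i) * minv (submatrix S (N i) (N i))"

definition nngp_B :: "real Matrix.mat \<Rightarrow> (nat \<Rightarrow> nat set) \<Rightarrow> real Matrix.mat" where
  "nngp_B S N = Matrix.mat (dim_row S) (dim_row S)
     (\<lambda>(i,j). if j \<in> N i then nngp_w S N i $$ (0, card {k \<in> N i. k < j}) else 0)"

definition nngp_F_entry :: "real Matrix.mat \<Rightarrow> (nat \<Rightarrow> nat set) \<Rightarrow> nat \<Rightarrow> real" where
  "nngp_F_entry S N i = S $$ (i,i) -
     (submatrix S {i} (N i) * minv (submatrix S (N i) (N i)) * submatrix S (N i) {i}) $$ (0,0)"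

definition nngp_F :: "real Matrix.mat \<Rightarrow> (nat \<Rightarrow> nat set) \<Rightarrow> real Matrix.mat" where
  "nngp_F S N = Matrix.mat (dim_row S) (dim_row S) (\<lambda>(i,j). if i = j then nngp_F_entry S N i else 0)"

definition nngp_Q :: "real Matrix.mat \<Rightarrow> (nat \<Rightarrow> nat set) \<Rightarrow> real Matrix.mat" where
  "nngp_Q S N = (let n = dim_row S; IB = 1\<^sub>m n - nngp_B S N in
     transpose_mat IB * minv (nngp_F S N) * IB)"

end

(*
  The Matern covariance is a scale mixture of Gaussian kernels:
  C(d) = sigma2 / Gamma nu * int exp (nu s - e^s) exp (- phi^2/2 e^(-s) d^2) ds.
  Gaussian kernels are positive semidefinite, and on h-separated points they are
  close to the identity matrix once the scale e^(-s) is large.  Integrating over a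
  window of such scales shows that all covariance matrices of at most m + 1
  separated locations have least eigenvalue at least some c > 0 depending only on
  h, sigma2, phi, nu and m.  Hence every conditional variance F_ii, a Schur
  complement, satisfies c (1 + |B_i|^2) <= F_ii <= sigma2 + tau2.  Finally
  v^T Q v = sum_i ((I - B) v)_i^2 / F_ii, and as each row of I - B has at most
  m + 1 nonzero entries and each column at most M + 1, this is at most
  (m + 1) (1 + (sigma2 + tau2) / c) (1 + M) / c times |v|^2.
*)
theory Submission
  imports Defs
begin

(* The Gamma integrand t powr (nu - 1) * exp (- t) dt written in the variable s = ln t. *)
definition gamma_mixing_weight :: "real \<Rightarrow> real \<Rightarrow> real" where
  "gamma_mixing_weight \<nu> s = exp (\<nu> * s - exp s)"

lemma gamma_mixing_weight_integral:
  assumes "\<nu> > 0"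
  shows "gamma_mixing_weight \<nu> absolutely_integrable_on UNIV"
    and "integral UNIV (gamma_mixing_weight \<nu>) = Gamma \<nu>"
proof -
  define f where "f t = t powr (\<nu> - 1) / exp t" for t :: real
  have "(f has_integral Gamma \<nu>) {0..}"
    unfolding f_def by (rule Gamma_integral_real[OF assms])
  then have "((\<lambda>t. if t \<in> {0<..} then f t else 0) has_integral Gamma \<nu>) {0..}"
    by (rule has_integral_spike[of "{0}", rotated 2]) auto
  then have f_int: "(f has_integral Gamma \<nu>) {0<..}"
    by (subst (asm) has_integral_restrict) auto
  then have "f absolutely_integrable_on {0<..}"
    by (intro nonnegative_absolutely_integrable_1) (auto simp: f_def)
  moreover have "exp ` UNIV = {0::real<..}"
    using exp_total by (auto intro: image_eqI[of _ _ "ln _"])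
  moreover have "\<bar>exp s\<bar> * f (exp s) = gamma_mixing_weight \<nu> s" for s
    by (simp add: f_def gamma_mixing_weight_def powr_def exp_diff[symmetric] exp_add[symmetric] algebra_simps)
  ultimately have "gamma_mixing_weight \<nu> absolutely_integrable_on UNIV \<and>
      integral UNIV (gamma_mixing_weight \<nu>) = Gamma \<nu>"
    using has_absolute_integral_change_of_variables_1'[where g = exp and g' = exp and f = f and S = UNIV]
      f_int by (auto intro!: derivative_eq_intros inj_onI simp: integral_unique)
  then show "gamma_mixing_weight \<nu> absolutely_integrable_on UNIV"
    and "integral UNIV (gamma_mixing_weight \<nu>) = Gamma \<nu>" by auto
qed

lemma gamma_mixing_weight_ge:
  assumes "\<nu> > 0" "s \<in> {s0 - 1..s0}"
  shows "exp (\<nu> * (s0 - 1) - exp s0) \<le> gamma_mixing_weight \<nu> s"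
proof -
  have "\<nu> * (s0 - 1) \<le> \<nu> * s" "exp s \<le> exp s0"
    using assms by simp_all
  then have "\<nu> * (s0 - 1) - exp s0 \<le> \<nu> * s - exp s"
    by linarith
  then show ?thesis
    by (simp add: gamma_mixing_weight_def)
qed

lemma gamma_mixing_weight_gaussian_integrable:
  assumes "\<nu> > 0" "a \<ge> 0"
  shows "(\<lambda>s. gamma_mixing_weight \<nu> s * exp (- (a * exp (- s)))) absolutely_integrable_on UNIV"
proof -
  have "(\<lambda>s. exp (- (a * exp (- s))) * gamma_mixing_weight \<nu> s) absolutely_integrable_on UNIV"
  proof (rule absolutely_integrable_bounded_measurable_product_real)
    show "(\<lambda>s. exp (- (a * exp (- s)))) \<in> borel_measurable (lebesgue_on UNIV)"
      by (intro continuous_imp_measurable_on_sets_lebesgue continuous_intros) auto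
    have "\<bar>exp (- (a * exp (- s)))\<bar> \<le> 1" for s
      using assms(2) by simp
    then show "bounded (range (\<lambda>s. exp (- (a * exp (- s)))))"
      unfolding bounded_real by blast
  qed (use gamma_mixing_weight_integral[OF assms(1)] in auto)
  then show ?thesis
    by (simp add: mult.commute)
qed

lemma besselK_shifted_integral:
  assumes "z > 0" "\<nu> > 0"
  shows "(\<lambda>t. exp (\<nu> * t - z * cosh t)) absolutely_integrable_on UNIV"
    and "integral UNIV (\<lambda>t. exp (\<nu> * t - z * cosh t)) =
      (z/2) powr (- \<nu>) * integral UNIV (\<lambda>s. gamma_mixing_weight \<nu> s * exp (- ((z/2)\<^sup>2 * exp (- s))))"
proof -
  define E where "E t = exp (\<nu> * t - z * cosh t)" for t
  define G where "G s = gamma_mixing_weight \<nu> s * exp (- ((z/2)\<^sup>2 * exp (- s)))" for s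
  define L where "L = ln (z/2)"
  have shift: "E (s - L) = (z/2) powr (- \<nu>) * G s" for s
  proof -
    have "exp (s - L) = exp s * (2/z)" "exp (- (s - L)) = exp (- s) * (z/2)"
      using assms(1) by (simp_all add: L_def exp_diff exp_minus field_simps)
    then have "z * cosh (s - L) = exp s + (z/2)\<^sup>2 * exp (- s)"
      unfolding cosh_def using assms(1) by (simp add: field_simps power2_eq_square)
    then have "E (s - L) = exp (\<nu> * s - exp s) * exp (- ((z/2)\<^sup>2 * exp (- s))) * exp (- (\<nu> * L))"
      by (simp add: E_def exp_add[symmetric] algebra_simps)
    then show ?thesis
      using assms(1) by (simp add: G_def gamma_mixing_weight_def L_def powr_def)
  qed
  have "(\<lambda>s. (z/2) powr (- \<nu>) * G s) absolutely_integrable_on UNIV"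
    unfolding G_def using gamma_mixing_weight_gaussian_integrable[OF assms(2), of "(z/2)\<^sup>2"]
    by (intro set_integrable_mult_right) auto
  then have "E absolutely_integrable_on ((\<lambda>s. s - L) ` UNIV) \<and>
      integral ((\<lambda>s. s - L) ` UNIV) E = (z/2) powr (- \<nu>) * integral UNIV G"
    by (intro has_absolute_integral_change_of_variables_1'[where g' = "\<lambda>_. 1", THEN iffD1])
      (auto simp: shift intro!: derivative_eq_intros inj_onI)
  moreover have "(\<lambda>s. s - L) ` UNIV = UNIV"
    by (auto intro: image_eqI[of _ _ "_ + L"])
  ultimately show "E absolutely_integrable_on UNIV"
    and "integral UNIV E = (z/2) powr (- \<nu>) * integral UNIV G"
    by auto
qed

lemma besselK_eq_half_integral:
  assumes "z > 0" "\<nu> > 0"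
  shows "besselK \<nu> z = integral UNIV (\<lambda>t. exp (\<nu> * t - z * cosh t)) / 2"
proof -
  define E where "E t = exp (\<nu> * t - z * cosh t)" for t
  have "E absolutely_integrable_on UNIV"
    unfolding E_def by (rule besselK_shifted_integral(1)[OF assms])
  then have E_pos: "E absolutely_integrable_on {0..}" and E_neg: "E absolutely_integrable_on {..0}"
    by (auto intro: set_integrable_subset)
  have "uminus ` {0..} = {..0::real}"
    by (auto intro: image_eqI[of _ _ "- _"])
  then have "(\<lambda>t. \<bar>-1\<bar> * E (- t)) absolutely_integrable_on {0..} \<and>
      integral {0..} (\<lambda>t. \<bar>-1\<bar> * E (- t)) = integral {..0} E"
    using E_neg by (subst has_absolute_integral_change_of_variables_1'[where g' = "\<lambda>_. -1"])
      (auto intro!: derivative_eq_intros inj_onI)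
  then have E_refl: "(\<lambda>t. E (- t)) absolutely_integrable_on {0..}"
    and E_refl_integral: "integral {0..} (\<lambda>t. E (- t)) = integral {..0} E"
    by auto
  have "{0..} \<union> {..0} = (UNIV :: real set)"
    by auto
  then have "integral UNIV E = integral ({0..} \<union> {..0}) E"
    by simp
  also have "\<dots> = integral {0..} E + integral {..0} E"
  proof (rule integral_Un)
    have "{0..} \<inter> {..0} = {0::real}"
      by auto
    then show "negligible ({0..} \<inter> {..0::real})"
      by simp
  qed (use E_pos E_neg in \<open>auto simp: absolutely_integrable_on_def\<close>)
  also have "\<dots> = integral {0..} (\<lambda>t. E t + E (- t))"
    using E_refl_integral E_pos E_refl by (simp add: integral_add set_lebesgue_integral_eq_integral(1))
  also have "\<dots> = integral {0..} (\<lambda>t. 2 * (exp (- z * cosh t) * cosh (\<nu> * t)))"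
  proof (intro integral_cong)
    fix t :: real
    have "E t + E (- t) = exp (- z * cosh t) * (exp (\<nu> * t) + exp (- (\<nu> * t)))"
      by (simp add: E_def distrib_left flip: exp_add)
    then show "E t + E (- t) = 2 * (exp (- z * cosh t) * cosh (\<nu> * t))"
      by (simp add: cosh_def)
  qed
  also have "\<dots> = 2 * besselK \<nu> z"
    by (simp add: besselK_def)
  finally show ?thesis
    unfolding E_def by simp
qed

lemma matern_gaussian_mixture:
  assumes "\<phi> > 0" "\<nu> > 0" "d \<ge> 0"
  shows "matern \<sigma>2 \<phi> \<nu> d = \<sigma>2 / Gamma \<nu> *
    integral UNIV (\<lambda>s. gamma_mixing_weight \<nu> s * exp (- (\<phi>\<^sup>2 / 2 * d\<^sup>2 * exp (- s))))"
proof (cases "d = 0")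
  case True
  then show ?thesis
    using gamma_mixing_weight_integral(2)[OF assms(2)] Gamma_real_pos[OF assms(2)]
    by (simp add: matern_def)
next
  case False
  define z where "z = sqrt 2 * \<phi> * d"
  define I where "I = integral UNIV (\<lambda>s. gamma_mixing_weight \<nu> s * exp (- (\<phi>\<^sup>2 / 2 * d\<^sup>2 * exp (- s))))"
  have z: "z > 0"
    using False assms by (simp add: z_def)
  have z_half_sq: "(z/2)\<^sup>2 = \<phi>\<^sup>2 / 2 * d\<^sup>2"
    by (simp add: z_def power_mult_distrib power_divide)
  have besselK_z: "besselK \<nu> z = (z/2) powr (- \<nu>) * I / 2"
    using besselK_eq_half_integral[OF z assms(2)] besselK_shifted_integral(2)[OF z assms(2)]
    unfolding z_half_sq I_def by simp
  have "2 powr (1 - \<nu>) * z powr \<nu> * (z/2) powr (- \<nu>) = 2 powr (1 - \<nu> + \<nu>) * z powr (\<nu> - \<nu>)"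
    using z by (simp add: powr_divide powr_minus_divide powr_add powr_diff)
  then have "2 powr (1 - \<nu>) * z powr \<nu> * (z/2) powr (- \<nu>) = 2"
    using z by simp
  moreover have "matern \<sigma>2 \<phi> \<nu> d = 2 powr (1 - \<nu>) * \<sigma>2 * z powr \<nu> / Gamma \<nu> * besselK \<nu> z"
    using False by (simp add: matern_def z_def)
  ultimately show ?thesis
    unfolding besselK_z I_def[symmetric] by (simp add: field_simps)
qed

lemma inner_power_kernel_psd:
  fixes y :: "'i \<Rightarrow> 'a::euclidean_space" and z :: "'i \<Rightarrow> real"
  assumes "finite I"
  shows "0 \<le> (\<Sum>a\<in>I. \<Sum>b\<in>I. z a * z b * inner (y a) (y b) ^ k)"
proof (induction k arbitrary: z)
  case 0
  have "(\<Sum>a\<in>I. \<Sum>b\<in>I. z a * z b * inner (y a) (y b) ^ 0) = (\<Sum>a\<in>I. z a)\<^sup>2"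
    by (simp add: power2_eq_square sum_product)
  then show ?case
    by simp
next
  case (Suc k)
  have "inner (y a) (y b) ^ Suc k = (\<Sum>i\<in>Basis. inner (y a) i * inner (y b) i) * inner (y a) (y b) ^ k"
    for a b by (metis euclidean_inner power_Suc)
  then have "(\<Sum>a\<in>I. \<Sum>b\<in>I. z a * z b * inner (y a) (y b) ^ Suc k) =
      (\<Sum>a\<in>I. \<Sum>b\<in>I. \<Sum>i\<in>Basis. (z a * inner (y a) i) * (z b * inner (y b) i) * inner (y a) (y b) ^ k)"
    by (simp add: sum_distrib_left sum_distrib_right mult_ac)
  also have "\<dots> = (\<Sum>i\<in>Basis. \<Sum>a\<in>I. \<Sum>b\<in>I. (z a * inner (y a) i) * (z b * inner (y b) i) * inner (y a) (y b) ^ k)"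
    by (subst sum.swap, rule sum.cong[OF refl], rule sum.swap)
  also have "\<dots> \<ge> 0"
    by (rule sum_nonneg, rule Suc.IH)
  finally show ?case .
qed

lemma gaussian_kernel_psd:
  fixes y :: "'i \<Rightarrow> 'a::euclidean_space" and x :: "'i \<Rightarrow> real"
  assumes "finite I" "c \<ge> 0"
  shows "0 \<le> (\<Sum>a\<in>I. \<Sum>b\<in>I. x a * x b * exp (- (c * (dist (y a) (y b))\<^sup>2)))"
proof -
  define z where "z a = x a * exp (- (c * (norm (y a))\<^sup>2))" for a
  define u where "u a b = 2 * c * inner (y a) (y b)" for a b
  have factor: "x a * x b * exp (- (c * (dist (y a) (y b))\<^sup>2)) = z a * z b * exp (u a b)" for a b
  proof -
    have dist_sq: "(dist (y a) (y b))\<^sup>2 = (norm (y a))\<^sup>2 + (norm (y b))\<^sup>2 - 2 * inner (y a) (y b)"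
      unfolding dist_norm power2_norm_eq_inner by (simp add: inner_diff_left inner_diff_right inner_commute)
    have "- (c * (dist (y a) (y b))\<^sup>2) = - (c * (norm (y a))\<^sup>2) + - (c * (norm (y b))\<^sup>2) + u a b"
      unfolding dist_sq u_def by (simp add: algebra_simps)
    then show ?thesis
      unfolding z_def by (simp add: mult_ac flip: exp_add)
  qed
  have series: "(\<lambda>k. \<Sum>a\<in>I. \<Sum>b\<in>I. z a * z b * (u a b ^ k /\<^sub>R fact k))
      sums (\<Sum>a\<in>I. \<Sum>b\<in>I. z a * z b * exp (u a b))"
    by (intro sums_sum sums_mult exp_converges)
  have terms_nonneg: "0 \<le> (\<Sum>a\<in>I. \<Sum>b\<in>I. z a * z b * (u a b ^ k /\<^sub>R fact k))" for k
  proof -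
    have "(\<Sum>a\<in>I. \<Sum>b\<in>I. z a * z b * (u a b ^ k /\<^sub>R fact k)) =
        (2 * c) ^ k / fact k * (\<Sum>a\<in>I. \<Sum>b\<in>I. z a * z b * inner (y a) (y b) ^ k)"
      unfolding u_def sum_distrib_left
      by (intro sum.cong refl) (simp add: power_mult_distrib divide_inverse mult.commute mult.left_commute)
    also have "\<dots> \<ge> 0"
      using assms(2) by (intro mult_nonneg_nonneg inner_power_kernel_psd[OF assms(1)]) simp
    finally show ?thesis .
  qed
  have "0 \<le> (\<Sum>a\<in>I. \<Sum>b\<in>I. z a * z b * exp (u a b))"
    by (rule sums_le[OF _ sums_zero series]) (use terms_nonneg in auto)
  then show ?thesis
    unfolding factor .
qed

lemma quadratic_form_near_identity:
  fixes G :: "'i \<Rightarrow> 'i \<Rightarrow> real" and x :: "'i \<Rightarrow> real" and \<epsilon> :: real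
  assumes "finite I" "0 \<le> \<epsilon>" "\<epsilon> * card I \<le> 1/2"
    and diag: "\<And>a. a \<in> I \<Longrightarrow> G a a = 1"
    and off_diag: "\<And>a b. a \<in> I \<Longrightarrow> b \<in> I \<Longrightarrow> a \<noteq> b \<Longrightarrow> \<bar>G a b\<bar> \<le> \<epsilon>"
  shows "(\<Sum>a\<in>I. (x a)\<^sup>2) / 2 \<le> (\<Sum>a\<in>I. \<Sum>b\<in>I. x a * x b * G a b)"
proof -
  define X where "X = (\<Sum>a\<in>I. (x a)\<^sup>2)"
  have entry: "(if a = b then (1 + \<epsilon>) * (x a)\<^sup>2 else 0) - \<epsilon> * (\<bar>x a\<bar> * \<bar>x b\<bar>) \<le> x a * x b * G a b"
    if "a \<in> I" "b \<in> I" for a b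
  proof (cases "a = b")
    case True
    then show ?thesis
      using diag[OF that(1)] by (simp add: algebra_simps power2_eq_square)
  next
    case False
    have "\<bar>x a * x b * G a b\<bar> \<le> (\<bar>x a\<bar> * \<bar>x b\<bar>) * \<epsilon>"
      unfolding abs_mult using off_diag[OF that False] by (intro mult_left_mono) auto
    then show ?thesis
      using False by (simp add: abs_le_iff mult.commute)
  qed
  have "(1 + \<epsilon>) * X - \<epsilon> * (\<Sum>a\<in>I. \<bar>x a\<bar>)\<^sup>2
      = (\<Sum>a\<in>I. \<Sum>b\<in>I. (if a = b then (1 + \<epsilon>) * (x a)\<^sup>2 else 0) - \<epsilon> * (\<bar>x a\<bar> * \<bar>x b\<bar>))"
  proof -
    have "(\<Sum>a\<in>I. \<bar>x a\<bar>)\<^sup>2 = (\<Sum>a\<in>I. \<Sum>b\<in>I. \<bar>x a\<bar> * \<bar>x b\<bar>)"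
      by (simp add: power2_eq_square sum_product)
    then show ?thesis
      using assms(1) by (simp add: X_def sum_subtractf sum_distrib_left)
  qed
  also have "\<dots> \<le> (\<Sum>a\<in>I. \<Sum>b\<in>I. x a * x b * G a b)"
    by (intro sum_mono entry)
  finally have lower: "(1 + \<epsilon>) * X - \<epsilon> * (\<Sum>a\<in>I. \<bar>x a\<bar>)\<^sup>2 \<le> (\<Sum>a\<in>I. \<Sum>b\<in>I. x a * x b * G a b)" .
  have "(\<Sum>a\<in>I. \<bar>x a\<bar>)\<^sup>2 \<le> card I * X"
    using sum_squared_le_sum_of_squares[of "\<lambda>a. \<bar>x a\<bar>" I] by (simp add: X_def mult.commute)
  then have "\<epsilon> * (\<Sum>a\<in>I. \<bar>x a\<bar>)\<^sup>2 \<le> (\<epsilon> * card I) * X"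
    using assms(2) by (simp add: mult_left_mono mult.assoc)
  also have "\<dots> \<le> 1/2 * X"
    using assms(3) by (intro mult_right_mono) (auto simp: X_def sum_nonneg)
  finally have "\<epsilon> * (\<Sum>a\<in>I. \<bar>x a\<bar>)\<^sup>2 \<le> X / 2"
    by simp
  moreover have "0 \<le> \<epsilon> * X"
    using assms(2) by (simp add: X_def sum_nonneg)
  ultimately show ?thesis
    using lower unfolding X_def[symmetric] by (simp add: algebra_simps)
qed

lemma matern_quadratic_form_integral:
  fixes t :: "'i \<Rightarrow> 'a::metric_space" and x :: "'i \<Rightarrow> real"
  assumes "finite I" "\<phi> > 0" "\<nu> > 0"
  defines "Q s \<equiv> (\<Sum>a\<in>I. \<Sum>b\<in>I. x a * x b * exp (- (\<phi>\<^sup>2 / 2 * exp (- s) * (dist (t a) (t b))\<^sup>2)))"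
  shows "(\<lambda>s. gamma_mixing_weight \<nu> s * Q s) integrable_on UNIV"
    and "(\<Sum>a\<in>I. \<Sum>b\<in>I. x a * x b * matern \<sigma>2 \<phi> \<nu> (dist (t a) (t b))) =
      \<sigma>2 / Gamma \<nu> * integral UNIV (\<lambda>s. gamma_mixing_weight \<nu> s * Q s)"
proof -
  define F where "F a b s = gamma_mixing_weight \<nu> s * exp (- (\<phi>\<^sup>2 / 2 * (dist (t a) (t b))\<^sup>2 * exp (- s)))"
    for a b s
  have F_int: "F a b integrable_on UNIV" for a b
    using gamma_mixing_weight_gaussian_integrable[OF assms(3), of "\<phi>\<^sup>2 / 2 * (dist (t a) (t b))\<^sup>2"]
    unfolding absolutely_integrable_on_def F_def[abs_def] by simp
  have xF_int: "(\<lambda>s. x a * x b * F a b s) integrable_on UNIV" for a b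
    using integrable_cmul[OF F_int, of "x a * x b"] by simp
  have Q_eq: "gamma_mixing_weight \<nu> s * Q s = (\<Sum>a\<in>I. \<Sum>b\<in>I. x a * x b * F a b s)" for s
    by (simp add: Q_def F_def sum_distrib_left mult_ac)
  show "(\<lambda>s. gamma_mixing_weight \<nu> s * Q s) integrable_on UNIV"
    unfolding Q_eq by (intro integrable_sum assms(1) xF_int)
  have "(\<Sum>a\<in>I. \<Sum>b\<in>I. x a * x b * matern \<sigma>2 \<phi> \<nu> (dist (t a) (t b))) =
      (\<Sum>a\<in>I. \<Sum>b\<in>I. \<sigma>2 / Gamma \<nu> * integral UNIV (\<lambda>s. x a * x b * F a b s))"
    by (intro sum.cong refl)
      (simp add: matern_gaussian_mixture[OF assms(2,3)] F_def[abs_def] integral_mult[OF F_int, symmetric])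
  also have "\<dots> = \<sigma>2 / Gamma \<nu> * integral UNIV (\<lambda>s. \<Sum>a\<in>I. \<Sum>b\<in>I. x a * x b * F a b s)"
    using assms(1) xF_int by (simp add: integral_sum integrable_sum sum_distrib_left)
  finally show "(\<Sum>a\<in>I. \<Sum>b\<in>I. x a * x b * matern \<sigma>2 \<phi> \<nu> (dist (t a) (t b))) =
      \<sigma>2 / Gamma \<nu> * integral UNIV (\<lambda>s. gamma_mixing_weight \<nu> s * Q s)"
    unfolding Q_eq .
qed

lemma gaussian_quadratic_form_ge_half:
  fixes t :: "'i \<Rightarrow> 'a::metric_space" and x :: "'i \<Rightarrow> real" and \<gamma> h :: real
  assumes "finite I" "card I \<le> m" "0 \<le> h"
    and sep: "\<And>a b. a \<in> I \<Longrightarrow> b \<in> I \<Longrightarrow> a \<noteq> b \<Longrightarrow> h \<le> dist (t a) (t b)"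
    and scale: "ln (2 * real m + 2) \<le> \<gamma> * h\<^sup>2"
  shows "(\<Sum>a\<in>I. (x a)\<^sup>2) / 2 \<le> (\<Sum>a\<in>I. \<Sum>b\<in>I. x a * x b * exp (- (\<gamma> * (dist (t a) (t b))\<^sup>2)))"
proof (rule quadratic_form_near_identity[OF assms(1)])
  show "0 \<le> 1 / (2 * real m + 2)" "1 / (2 * real m + 2) * card I \<le> 1/2"
    using assms(2) by (simp_all add: field_simps)
  have "0 < ln (2 * real m + 2)"
    by simp
  then have "0 \<le> \<gamma>"
    using scale by (smt (verit) mult_nonpos_nonneg zero_le_power2)
  fix a b assume ab: "a \<in> I" "b \<in> I" "a \<noteq> b"
  have "h\<^sup>2 \<le> (dist (t a) (t b))\<^sup>2"
    using sep[OF ab] \<open>0 \<le> h\<close> by (intro power_mono) auto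
  then have "ln (2 * real m + 2) \<le> \<gamma> * (dist (t a) (t b))\<^sup>2"
    using scale \<open>0 \<le> \<gamma>\<close> by (smt (verit) mult_left_mono)
  then have "exp (- (\<gamma> * (dist (t a) (t b))\<^sup>2)) \<le> exp (- ln (2 * real m + 2))"
    by simp
  then show "\<bar>exp (- (\<gamma> * (dist (t a) (t b))\<^sup>2))\<bar> \<le> 1 / (2 * real m + 2)"
    by (simp add: exp_minus inverse_eq_divide)
qed simp

lemma integral_ge_of_lower_bound_on_interval:
  fixes f :: "real \<Rightarrow> real"
  assumes "f integrable_on UNIV" "\<And>s. 0 \<le> f s" "\<And>s. s \<in> {a..b} \<Longrightarrow> C \<le> f s" "a \<le> b"
  shows "C * (b - a) \<le> integral UNIV f"
proof -
  have "C * (b - a) = integral {a..b} (\<lambda>_. C)"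
    using assms(4) by simp
  also have "\<dots> \<le> integral {a..b} f"
    using assms(1,3) by (intro integral_le integrable_on_subinterval[OF assms(1)]) auto
  also have "\<dots> \<le> integral UNIV f"
    using assms(1,2) by (intro integral_subset_le integrable_on_subinterval[OF assms(1)]) auto
  finally show ?thesis .
qed

lemma matern_coercive_on_separated_points:
  fixes h \<sigma>2 \<phi> \<nu> :: real and m :: nat
  assumes "h > 0" "\<sigma>2 > 0" "\<phi> > 0" "\<nu> > 0"
  obtains c :: real where "c > 0"
    and "\<And>I (t :: 'i \<Rightarrow> 'a::euclidean_space) x. finite I \<Longrightarrow> card I \<le> m \<Longrightarrow>
      (\<And>a b. a \<in> I \<Longrightarrow> b \<in> I \<Longrightarrow> a \<noteq> b \<Longrightarrow> h \<le> dist (t a) (t b)) \<Longrightarrow>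
      c * (\<Sum>a\<in>I. (x a)\<^sup>2) \<le> (\<Sum>a\<in>I. \<Sum>b\<in>I. x a * x b * matern \<sigma>2 \<phi> \<nu> (dist (t a) (t b)))"
proof -
  (* For s \<le> s0 the Gaussian kernel of scale \<beta> * exp (- s) is within 1 / (2 m + 2) of the identity
     on h-separated points, and on [s0 - 1, s0] the mixing weight is at least \<omega>. *)
  define \<beta> where "\<beta> = \<phi>\<^sup>2 / 2"
  define s0 where "s0 = ln (\<beta> * h\<^sup>2 / ln (2 * real m + 2))"
  define \<omega> where "\<omega> = exp (\<nu> * (s0 - 1) - exp s0)"
  define c where "c = \<sigma>2 / Gamma \<nu> * \<omega> / 2"
  have "\<beta> > 0"
    using assms(3) by (simp add: \<beta>_def)
  then have exp_s0: "\<beta> * exp (- s0) * h\<^sup>2 = ln (2 * real m + 2)"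
    using assms(1) by (simp add: s0_def exp_minus)
  have "c > 0"
    using assms(2,4) by (simp add: c_def \<omega>_def)
  moreover have "c * (\<Sum>a\<in>I. (x a)\<^sup>2) \<le> (\<Sum>a\<in>I. \<Sum>b\<in>I. x a * x b * matern \<sigma>2 \<phi> \<nu> (dist (t a) (t b)))"
    if I: "finite I" "card I \<le> m" and sep: "\<And>a b. a \<in> I \<Longrightarrow> b \<in> I \<Longrightarrow> a \<noteq> b \<Longrightarrow> h \<le> dist (t a) (t b)"
    for I and t :: "'i \<Rightarrow> 'a" and x
  proof -
    define X where "X = (\<Sum>a\<in>I. (x a)\<^sup>2)"
    define Q where "Q s = (\<Sum>a\<in>I. \<Sum>b\<in>I. x a * x b * exp (- (\<beta> * exp (- s) * (dist (t a) (t b))\<^sup>2)))" for s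
    define WQ where "WQ s = gamma_mixing_weight \<nu> s * Q s" for s
    have WQ_int: "WQ integrable_on UNIV"
      and quadratic_form: "(\<Sum>a\<in>I. \<Sum>b\<in>I. x a * x b * matern \<sigma>2 \<phi> \<nu> (dist (t a) (t b))) =
        \<sigma>2 / Gamma \<nu> * integral UNIV WQ"
      unfolding WQ_def[abs_def] Q_def \<beta>_def using matern_quadratic_form_integral[OF I(1) assms(3,4)] by auto
    have "0 \<le> WQ s" for s
      unfolding WQ_def Q_def using \<open>\<beta> > 0\<close> I(1)
      by (intro mult_nonneg_nonneg gaussian_kernel_psd) (simp_all add: gamma_mixing_weight_def)
    moreover have "\<omega> * (X / 2) \<le> WQ s" if s: "s \<in> {s0 - 1..s0}" for s
    proof -
      have "\<omega> \<le> gamma_mixing_weight \<nu> s"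
        unfolding \<omega>_def using assms(4) s by (rule gamma_mixing_weight_ge)
      moreover have "ln (2 * real m + 2) \<le> \<beta> * exp (- s) * h\<^sup>2"
        unfolding exp_s0[symmetric] using s \<open>\<beta> > 0\<close> by (intro mult_right_mono mult_left_mono) auto
      then have "X / 2 \<le> Q s"
        unfolding X_def Q_def using I sep assms(1) by (intro gaussian_quadratic_form_ge_half) auto
      moreover have "0 \<le> X / 2"
        by (simp add: X_def sum_nonneg)
      ultimately show ?thesis
        unfolding WQ_def by (intro mult_mono) (auto simp: gamma_mixing_weight_def)
    qed
    ultimately have "\<omega> * (X / 2) * (s0 - (s0 - 1)) \<le> integral UNIV WQ"
      by (intro integral_ge_of_lower_bound_on_interval WQ_int) auto
    then have "\<sigma>2 / Gamma \<nu> * (\<omega> * (X / 2)) \<le> \<sigma>2 / Gamma \<nu> * integral UNIV WQ"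
      using assms(2,4) by (intro mult_left_mono) auto
    then show ?thesis
      unfolding quadratic_form by (simp add: c_def X_def mult_ac)
  qed
  ultimately show ?thesis
    using that by blast
qed

lemma index_mult_mat_sum:
  fixes A B :: "'a::comm_ring_1 mat"
  assumes "A \<in> carrier_mat r s" "B \<in> carrier_mat s t" "i < r" "j < t"
  shows "(A * B) $$ (i, j) = (\<Sum>l<s. A $$ (i, l) * B $$ (l, j))"
  using assms by (simp add: scalar_prod_def atLeast0LessThan)

lemma index_mult_mat_vec_sum:
  fixes A :: "'a::comm_ring_1 mat"
  assumes "A \<in> carrier_mat r s" "v \<in> carrier_vec s" "i < r"
  shows "(A *\<^sub>v v) $ i = (\<Sum>l<s. A $$ (i, l) * v $ l)"
  using assms by (simp add: scalar_prod_def atLeast0LessThan)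

lemma sum_squares_pos_if_nonzero_vec:
  fixes v :: "real vec"
  assumes "v \<in> carrier_vec n" "v \<noteq> 0\<^sub>v n"
  shows "0 < (\<Sum>i<n. (v $ i)\<^sup>2)"
proof -
  obtain i where i: "i < n" "v $ i \<noteq> 0"
    using assms by (metis carrier_vecD eq_vecI index_zero_vec(1,2))
  have "0 < (v $ i)\<^sup>2"
    using i(2) by simp
  also have "\<dots> \<le> (\<Sum>i<n. (v $ i)\<^sup>2)"
    using i(1) by (intro member_le_sum) auto
  finally show ?thesis .
qed

lemma minv_inverse:
  assumes "A \<in> carrier_mat n n" "det A \<noteq> 0"
  shows "minv A \<in> carrier_mat n n" "A * minv A = 1\<^sub>m n" "minv A * A = 1\<^sub>m n"
proof -
  have "A \<in> Units (ring_mat TYPE(real) n ())"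
    by (rule det_non_zero_imp_unit[OF assms])
  then obtain B where "mat_inverse A = Some B"
    using mat_inverse(1)[OF assms(1), where b = "()"] by (cases "mat_inverse A") auto
  then show "minv A \<in> carrier_mat n n" "A * minv A = 1\<^sub>m n" "minv A * A = 1\<^sub>m n"
    using mat_inverse(2)[OF assms(1)] by (auto simp: minv_def)
qed

lemma minv_diag:
  assumes "\<And>i. i < n \<Longrightarrow> f i \<noteq> 0"
  shows "minv (mat n n (\<lambda>(i, j). if i = j then f i else 0)) = mat n n (\<lambda>(i, j). if i = j then 1 / f i else 0)"
proof -
  define D where "D = mat n n (\<lambda>(i, j). if i = j then f i else 0)"
  define E where "E = mat n n (\<lambda>(i, j). if i = j then 1 / f i else (0::real))"
  have D: "D \<in> carrier_mat n n" and E: "E \<in> carrier_mat n n"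
    by (simp_all add: D_def E_def)
  have DE: "D * E = 1\<^sub>m n"
  proof (rule eq_matI)
    fix i j assume "i < dim_row (1\<^sub>m n :: real mat)" "j < dim_col (1\<^sub>m n :: real mat)"
    then have ij: "i < n" "j < n"
      by simp_all
    have "(D * E) $$ (i, j) = (\<Sum>l<n. D $$ (i, l) * E $$ (l, j))"
      by (rule index_mult_mat_sum[OF D E ij])
    also have "\<dots> = (\<Sum>l<n. if l = i then f i * E $$ (i, j) else 0)"
      by (rule sum.cong) (auto simp: D_def ij)
    also have "\<dots> = 1\<^sub>m n $$ (i, j)"
      using assms[OF ij(1)] ij by (auto simp: E_def)
    finally show "(D * E) $$ (i, j) = 1\<^sub>m n $$ (i, j)" .
  qed (simp_all add: D_def E_def)
  then have "det D * det E = 1"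
    using det_mult[OF D E] by simp
  then have "det D \<noteq> 0"
    by auto
  note inv = minv_inverse[OF D this]
  have "minv D = minv D * (D * E)"
    using inv(1) by (simp add: DE)
  also have "\<dots> = (minv D * D) * E"
    using inv(1) D E by simp
  also have "\<dots> = E"
    using inv(3) E by simp
  finally show ?thesis
    by (simp add: D_def E_def)
qed

lemma submatrix_carrier_index:
  assumes "A \<in> carrier_mat n n'" "I \<subseteq> {..<n}" "J \<subseteq> {..<n'}"
  shows "submatrix A I J \<in> carrier_mat (card I) (card J)"
    and "i < card I \<Longrightarrow> j < card J \<Longrightarrow> submatrix A I J $$ (i, j) = A $$ (pick I i, pick J j)"
proof -
  have "dim_row A = n" "dim_col A = n'"
    using assms(1) by simp_all
  then have rows: "{i. i < dim_row A \<and> i \<in> I} = I" and cols: "{j. j < dim_col A \<and> j \<in> J} = J"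
    using assms(2,3) by auto
  show "submatrix A I J \<in> carrier_mat (card I) (card J)"
    using dim_submatrix[of A I J] unfolding rows cols by (intro carrier_matI)
  show "i < card I \<Longrightarrow> j < card J \<Longrightarrow> submatrix A I J $$ (i, j) = A $$ (pick I i, pick J j)"
    using submatrix_index[of i A I j J] unfolding rows cols .
qed

lemma sum_pick:
  assumes "finite P"
  shows "(\<Sum>a<card P. f (pick P a)) = sum f P"
proof -
  have card_less: "card {j \<in> P. j < i} < card P" if "i \<in> P" for i
    using assms that by (intro psubset_card_mono) auto
  have "bij_betw (pick P) {..<card P} P"
  proof (rule bij_betw_byWitness[where f' = "\<lambda>i. card {j \<in> P. j < i}"])
    show "\<forall>a\<in>{..<card P}. card {j \<in> P. j < pick P a} = a"
      by (simp add: card_pick_le)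
    show "\<forall>i\<in>P. pick P (card {j \<in> P. j < i}) = i"
      by (simp add: pick_card_in_set)
    show "pick P ` {..<card P} \<subseteq> P"
      by (auto simp: pick_in_set_le)
    show "(\<lambda>i. card {j \<in> P. j < i}) ` P \<subseteq> {..<card P}"
      using card_less by auto
  qed
  then show ?thesis
    by (rule sum.reindex_bij_betw)
qed

lemma det_nonzero_if_coercive:
  fixes A :: "real mat"
  assumes A: "A \<in> carrier_mat p p" and "c > 0"
    and coercive: "\<And>x. c * (\<Sum>a<p. (x a)\<^sup>2) \<le> (\<Sum>a<p. \<Sum>b<p. x a * x b * A $$ (a, b))"
  shows "det A \<noteq> 0"
proof
  assume "det A = 0"
  then obtain v where v: "v \<in> carrier_vec p" "v \<noteq> 0\<^sub>v p" "A *\<^sub>v v = 0\<^sub>v p"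
    using det_0_iff_vec_prod_zero_field[OF A] by blast
  have "(\<Sum>a<p. \<Sum>b<p. v $ a * v $ b * A $$ (a, b)) = (\<Sum>a<p. v $ a * (A *\<^sub>v v) $ a)"
    using index_mult_mat_vec_sum[OF A v(1)] by (simp add: sum_distrib_left mult_ac del: index_mult_mat_vec)
  also have "\<dots> = 0"
    using v(3) by simp
  finally have "c * (\<Sum>a<p. (v $ a)\<^sup>2) \<le> 0"
    using coercive[of "\<lambda>a. v $ a"] by simp
  then show False
    using sum_squares_pos_if_nonzero_vec[OF v(1,2)] \<open>c > 0\<close> by (simp add: mult_le_0_iff)
qed

lemma schur_complement_bounds:
  fixes A R C :: "real mat" and c d :: real
  assumes A: "A \<in> carrier_mat p p" and R: "R \<in> carrier_mat 1 p" and C: "C \<in> carrier_mat p 1"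
    and C_R: "\<And>a. a < p \<Longrightarrow> C $$ (a, 0) = R $$ (0, a)"
    and coercive: "\<And>x0 x. c * (x0\<^sup>2 + (\<Sum>a<p. (x a)\<^sup>2)) \<le>
      x0\<^sup>2 * d + 2 * x0 * (\<Sum>a<p. x a * R $$ (0, a)) + (\<Sum>a<p. \<Sum>b<p. x a * x b * A $$ (a, b))"
    and "c > 0"
  shows "c * (1 + (\<Sum>a<p. ((R * minv A) $$ (0, a))\<^sup>2)) \<le> d - (R * minv A * C) $$ (0, 0)"
    and "d - (R * minv A * C) $$ (0, 0) \<le> d"
proof -
  have A_coercive: "c * (\<Sum>a<p. (x a)\<^sup>2) \<le> (\<Sum>a<p. \<Sum>b<p. x a * x b * A $$ (a, b))" for x
    using coercive[of 0 x] by simp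
  have "det A \<noteq> 0"
    using A \<open>c > 0\<close> A_coercive by (rule det_nonzero_if_coercive)
  note inv = minv_inverse[OF A this]
  define W where "W = R * minv A"
  define w where "w a = W $$ (0, a)" for a
  have W: "W \<in> carrier_mat 1 p"
    using R inv(1) by (simp add: W_def)
  have "W * A = R"
    using R A inv by (simp add: W_def)
  then have R_w: "R $$ (0, b) = (\<Sum>a<p. w a * A $$ (a, b))" if "b < p" for b
    using index_mult_mat_sum[OF W A _ that, of 0] by (simp add: w_def)
  define \<rho> where "\<rho> = (\<Sum>a<p. w a * R $$ (0, a))"
  have WC: "(W * C) $$ (0, 0) = \<rho>"
    using index_mult_mat_sum[OF W C, of 0 0] C_R by (simp add: \<rho>_def w_def)
  have \<rho>_form: "\<rho> = (\<Sum>a<p. \<Sum>b<p. w a * w b * A $$ (a, b))"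
  proof -
    have "\<rho> = (\<Sum>b<p. \<Sum>a<p. w b * (w a * A $$ (a, b)))"
      by (simp add: \<rho>_def R_w sum_distrib_left)
    also have "\<dots> = (\<Sum>a<p. \<Sum>b<p. w a * w b * A $$ (a, b))"
      by (subst sum.swap) (simp add: mult_ac)
    finally show ?thesis .
  qed
  have "c * (\<Sum>a<p. (w a)\<^sup>2) \<le> \<rho>"
    unfolding \<rho>_form by (rule A_coercive)
  moreover have "0 \<le> c * (\<Sum>a<p. (w a)\<^sup>2)"
    using \<open>c > 0\<close> by (simp add: sum_nonneg)
  ultimately show "d - (R * minv A * C) $$ (0, 0) \<le> d"
    using WC by (simp add: W_def)
  (* The block form at the vector (1, - w) is the Schur complement d - \<rho>. *)
  have "c * (1 + (\<Sum>a<p. (w a)\<^sup>2)) \<le> d - 2 * \<rho> + \<rho>"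
    using coercive[of 1 "\<lambda>a. - w a"] by (simp add: \<rho>_def \<rho>_form[symmetric] sum_negf)
  then show "c * (1 + (\<Sum>a<p. ((R * minv A) $$ (0, a))\<^sup>2)) \<le> d - (R * minv A * C) $$ (0, 0)"
    using WC by (simp add: W_def w_def)
qed

definition principal_submatrices_coercive :: "real \<Rightarrow> nat \<Rightarrow> real mat \<Rightarrow> bool" where
  "principal_submatrices_coercive c q S \<longleftrightarrow>
     (\<forall>T x. T \<subseteq> {..<dim_row S} \<longrightarrow> card T \<le> q \<longrightarrow>
        c * (\<Sum>i\<in>T. (x i)\<^sup>2) \<le> (\<Sum>i\<in>T. \<Sum>j\<in>T. x i * x j * S $$ (i, j)))"

lemma principal_submatrices_coercive_block:
  fixes S :: "real mat" and x :: "nat \<Rightarrow> real"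
  assumes S: "S \<in> carrier_mat n n" and sym: "\<And>i j. i < n \<Longrightarrow> j < n \<Longrightarrow> S $$ (i, j) = S $$ (j, i)"
    and coercive: "principal_submatrices_coercive c q S"
    and P: "P \<subseteq> {..<n}" "k < n" "k \<notin> P" "card P < q"
  shows "c * (x0\<^sup>2 + (\<Sum>a<card P. (x a)\<^sup>2)) \<le> x0\<^sup>2 * S $$ (k, k)
      + 2 * x0 * (\<Sum>a<card P. x a * S $$ (k, pick P a))
      + (\<Sum>a<card P. \<Sum>b<card P. x a * x b * S $$ (pick P a, pick P b))"
proof -
  have "finite P"
    using P(1) finite_subset by blast
  (* card {j \<in> P. j < i} is the position of i in P, so y inverts the relabelling by pick P. *)
  define y where "y i = (if i = k then x0 else x (card {j \<in> P. j < i}))" for i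
  have reindex: "(\<Sum>i\<in>P. f i) = (\<Sum>a<card P. f (pick P a))" for f :: "nat \<Rightarrow> real"
    by (rule sum_pick[OF \<open>finite P\<close>, symmetric])
  have y_pick: "y (pick P a) = x a" if "a < card P" for a
    using pick_in_set_le[OF that] P(3) that by (auto simp: y_def card_pick_le)
  have "insert k P \<subseteq> {..<dim_row S}" "card (insert k P) \<le> q"
    using P S \<open>finite P\<close> by auto
  then have "c * (\<Sum>i\<in>insert k P. (y i)\<^sup>2) \<le> (\<Sum>i\<in>insert k P. \<Sum>j\<in>insert k P. y i * y j * S $$ (i, j))"
    using coercive unfolding principal_submatrices_coercive_def by blast
  moreover have "(\<Sum>i\<in>insert k P. (y i)\<^sup>2) = x0\<^sup>2 + (\<Sum>a<card P. (x a)\<^sup>2)"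
    using P(3) \<open>finite P\<close> by (simp add: reindex y_pick y_def[of k])
  moreover have "(\<Sum>i\<in>insert k P. \<Sum>j\<in>insert k P. y i * y j * S $$ (i, j)) = x0\<^sup>2 * S $$ (k, k)
      + 2 * x0 * (\<Sum>j\<in>P. y j * S $$ (k, j)) + (\<Sum>i\<in>P. \<Sum>j\<in>P. y i * y j * S $$ (i, j))"
  proof -
    have "S $$ (i, k) = S $$ (k, i)" if "i \<in> P" for i
      using sym P(1,2) that by auto
    then show ?thesis
      using P(3) \<open>finite P\<close> by (simp add: sum.distrib sum_distrib_left y_def[of k] power2_eq_square algebra_simps)
  qed
  ultimately show ?thesis
    by (simp add: reindex y_pick)
qed

lemma nngp_F_entry_bounds:
  fixes S :: "real mat"
  assumes S: "S \<in> carrier_mat n n" and sym: "\<And>i j. i < n \<Longrightarrow> j < n \<Longrightarrow> S $$ (i, j) = S $$ (j, i)"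
    and coercive: "principal_submatrices_coercive c (m + 1) S" and "c > 0"
    and k: "k < n" and N: "N k \<subseteq> {..<k}" "card (N k) \<le> m"
  shows "c * (1 + (\<Sum>a<card (N k). (nngp_w S N k $$ (0, a))\<^sup>2)) \<le> nngp_F_entry S N k"
    and "nngp_F_entry S N k \<le> S $$ (k, k)"
proof -
  define P where "P = N k"
  define p where "p = card P"
  have P: "P \<subseteq> {..<n}" "k \<notin> P" "card P < m + 1"
    using N k by (auto simp: P_def)
  have k_n: "{k} \<subseteq> {..<n}"
    using k by simp
  have pick_k: "pick {k} 0 = k"
    by (simp add: Least_equality)
  note A = submatrix_carrier_index[OF S P(1) P(1)]
  note R = submatrix_carrier_index[OF S k_n P(1)]
  note C = submatrix_carrier_index[OF S P(1) k_n]
  have R_entry: "submatrix S {k} P $$ (0, a) = S $$ (k, pick P a)" if "a < p" for a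
    using R(2)[of 0 a, unfolded pick_k] that by (simp add: p_def)
  have C_entry: "submatrix S P {k} $$ (a, 0) = S $$ (pick P a, k)" if "a < p" for a
    using C(2)[of a 0, unfolded pick_k] that by (simp add: p_def)
  have block: "c * (x0\<^sup>2 + (\<Sum>a<p. (x a)\<^sup>2)) \<le> x0\<^sup>2 * S $$ (k, k)
      + 2 * x0 * (\<Sum>a<p. x a * submatrix S {k} P $$ (0, a))
      + (\<Sum>a<p. \<Sum>b<p. x a * x b * submatrix S P P $$ (a, b))" for x0 x
    using principal_submatrices_coercive_block[OF S sym coercive P(1) k P(2,3), of x0 x]
    by (simp add: R_entry A(2)[folded p_def] p_def[symmetric])
  have C_R: "submatrix S P {k} $$ (a, 0) = submatrix S {k} P $$ (0, a)" if "a < p" for a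
    using that pick_in_set_le[of a P] P(1) sym k by (auto simp: R_entry C_entry p_def)
  have carriers: "submatrix S P P \<in> carrier_mat p p" "submatrix S {k} P \<in> carrier_mat 1 p"
      "submatrix S P {k} \<in> carrier_mat p 1"
    using A(1) R(1) C(1) by (simp_all add: p_def)
  show "c * (1 + (\<Sum>a<card (N k). (nngp_w S N k $$ (0, a))\<^sup>2)) \<le> nngp_F_entry S N k"
    and "nngp_F_entry S N k \<le> S $$ (k, k)"
    using schur_complement_bounds[OF carriers C_R block \<open>c > 0\<close>]
    unfolding nngp_w_def nngp_F_entry_def P_def p_def by blast+
qed

lemma eigenvalue_le_if_quadratic_form_le:
  fixes A :: "real mat"
  assumes A: "A \<in> carrier_mat n n" and ev: "eigenvalue A e"
    and bound: "\<And>v. v \<in> carrier_vec n \<Longrightarrow> (\<Sum>i<n. v $ i * (A *\<^sub>v v) $ i) \<le> K * (\<Sum>i<n. (v $ i)\<^sup>2)"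
  shows "e \<le> K"
proof -
  obtain v where v: "v \<in> carrier_vec n" "v \<noteq> 0\<^sub>v n" "A *\<^sub>v v = e \<cdot>\<^sub>v v"
    using ev A unfolding eigenvalue_def eigenvector_def by auto
  have "e * (\<Sum>i<n. (v $ i)\<^sup>2) = (\<Sum>i<n. v $ i * (A *\<^sub>v v) $ i)"
    using v by (simp add: sum_distrib_left power2_eq_square mult_ac)
  also have "\<dots> \<le> K * (\<Sum>i<n. (v $ i)\<^sup>2)"
    by (rule bound[OF v(1)])
  finally show ?thesis
    using sum_squares_pos_if_nonzero_vec[OF v(1,2)] by simp
qed

lemma quadratic_form_transpose_diag:
  fixes L :: "real mat"
  assumes L: "L \<in> carrier_mat n n" and v: "v \<in> carrier_vec n"
  shows "(\<Sum>i<n. v $ i * ((transpose_mat L * mat n n (\<lambda>(i, j). if i = j then g i else 0) * L) *\<^sub>v v) $ i)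
    = (\<Sum>l<n. g l * ((L *\<^sub>v v) $ l)\<^sup>2)"
proof -
  define D where "D = mat n n (\<lambda>(i, j). if i = j then g i else 0)"
  define y where "y = L *\<^sub>v v"
  have D: "D \<in> carrier_mat n n" and y: "y \<in> carrier_vec n"
    using L v by (simp_all add: D_def y_def)
  have "(transpose_mat L * D * L) *\<^sub>v v = (transpose_mat L * D) *\<^sub>v y"
    unfolding y_def by (rule assoc_mult_mat_vec) (use L D v in auto)
  also have "\<dots> = transpose_mat L *\<^sub>v (D *\<^sub>v y)"
    by (rule assoc_mult_mat_vec) (use L D y in auto)
  moreover have "(transpose_mat L *\<^sub>v (D *\<^sub>v y)) $ i = (\<Sum>l<n. L $$ (l, i) * (g l * y $ l))" if "i < n" for i
  proof -
    have "(D *\<^sub>v y) $ l = g l * y $ l" if "l < n" for l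
    proof -
      have "(D *\<^sub>v y) $ l = (\<Sum>j<n. (if l = j then g l else 0) * y $ j)"
        using index_mult_mat_vec_sum[OF D y that] that by (simp add: D_def del: index_mult_mat_vec)
      also have "\<dots> = (\<Sum>j<n. if l = j then g l * y $ j else 0)"
        by (rule sum.cong) auto
      also have "\<dots> = g l * y $ l"
        using that by simp
      finally show ?thesis .
    qed
    then show ?thesis
      using L D y that by (simp add: index_mult_mat_vec_sum del: index_mult_mat_vec)
  qed
  ultimately have "(\<Sum>i<n. v $ i * ((transpose_mat L * D * L) *\<^sub>v v) $ i)
      = (\<Sum>i<n. \<Sum>l<n. v $ i * (L $$ (l, i) * (g l * y $ l)))"
    by (simp add: sum_distrib_left)
  also have "\<dots> = (\<Sum>l<n. \<Sum>i<n. v $ i * (L $$ (l, i) * (g l * y $ l)))"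
    by (rule sum.swap)
  also have "\<dots> = (\<Sum>l<n. g l * y $ l * (\<Sum>i<n. L $$ (l, i) * v $ i))"
    by (simp add: sum_distrib_left mult_ac)
  also have "\<dots> = (\<Sum>l<n. g l * (y $ l)\<^sup>2)"
    using L v by (simp add: y_def index_mult_mat_vec_sum power2_eq_square mult.assoc del: index_mult_mat_vec)
  finally show ?thesis
    by (simp add: D_def y_def)
qed

lemma sum_neighbourhood_sums_le:
  fixes g :: "nat \<Rightarrow> real"
  assumes N: "\<And>l. l < n \<Longrightarrow> N l \<subseteq> {..<n}" and M: "\<And>j. j < n \<Longrightarrow> card {l. l < n \<and> j \<in> N l} \<le> M"
    and g: "\<And>j. 0 \<le> g j"
  shows "(\<Sum>l<n. \<Sum>j\<in>N l. g j) \<le> M * (\<Sum>j<n. g j)"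
proof -
  have "(\<Sum>l<n. \<Sum>j\<in>N l. g j) = (\<Sum>l<n. \<Sum>j<n. if j \<in> N l then g j else 0)"
  proof (rule sum.cong[OF refl])
    fix l assume "l \<in> {..<n}"
    then have "N l = {j \<in> {..<n}. j \<in> N l}"
      using N by auto
    then show "(\<Sum>j\<in>N l. g j) = (\<Sum>j<n. if j \<in> N l then g j else 0)"
      by (metis finite_lessThan sum.inter_filter)
  qed
  also have "\<dots> = (\<Sum>j<n. \<Sum>l<n. if j \<in> N l then g j else 0)"
    by (rule sum.swap)
  also have "\<dots> = (\<Sum>j<n. card {l. l < n \<and> j \<in> N l} * g j)"
  proof (rule sum.cong[OF refl])
    fix j
    have "{l \<in> {..<n}. j \<in> N l} = {l. l < n \<and> j \<in> N l}"
      by auto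
    then show "(\<Sum>l<n. if j \<in> N l then g j else 0) = card {l. l < n \<and> j \<in> N l} * g j"
      using sum.inter_filter[of "{..<n}" "\<lambda>_. g j" "\<lambda>l. j \<in> N l"] by simp
  qed
  also have "\<dots> \<le> (\<Sum>j<n. M * g j)"
    using M g by (intro sum_mono mult_right_mono) auto
  finally show ?thesis
    by (simp add: sum_distrib_left)
qed

lemma sparse_sum_square_le:
  fixes a x :: "nat \<Rightarrow> real" and W :: real
  assumes T: "T \<subseteq> {..<n}" and a_zero: "\<And>i. i < n \<Longrightarrow> i \<notin> T \<Longrightarrow> a i = 0"
    and a_bound: "\<And>i. i \<in> T \<Longrightarrow> (a i)\<^sup>2 \<le> W"
  shows "(\<Sum>i<n. a i * x i)\<^sup>2 \<le> card T * W * (\<Sum>i\<in>T. (x i)\<^sup>2)"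
proof -
  have "(\<Sum>i<n. a i * x i) = (\<Sum>i\<in>T. a i * x i)"
    using T a_zero by (intro sum.mono_neutral_right) auto
  then have "(\<Sum>i<n. a i * x i)\<^sup>2 \<le> (\<Sum>i\<in>T. (a i * x i)\<^sup>2) * card T"
    using sum_squared_le_sum_of_squares by simp
  also have "\<dots> \<le> (\<Sum>i\<in>T. W * (x i)\<^sup>2) * card T"
    using a_bound by (intro mult_right_mono sum_mono) (auto simp: power_mult_distrib intro: mult_right_mono)
  finally show ?thesis
    by (simp add: sum_distrib_left mult_ac)
qed

lemma nngp_B_carrier: "S \<in> carrier_mat n n \<Longrightarrow> nngp_B S N \<in> carrier_mat n n"
  by (simp add: nngp_B_def)

lemma nngp_B_index:
  "S \<in> carrier_mat n n \<Longrightarrow> k < n \<Longrightarrow> j < n \<Longrightarrow>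
    nngp_B S N $$ (k, j) = (if j \<in> N k then nngp_w S N k $$ (0, card {i \<in> N k. i < j}) else 0)"
  by (simp add: nngp_B_def)

lemma nngp_Q_diag_form:
  fixes S :: "real mat"
  assumes S: "S \<in> carrier_mat n n" and F: "\<And>k. k < n \<Longrightarrow> nngp_F_entry S N k \<noteq> 0"
  shows "nngp_Q S N = transpose_mat (1\<^sub>m n - nngp_B S N)
    * mat n n (\<lambda>(i, j). if i = j then 1 / nngp_F_entry S N i else 0) * (1\<^sub>m n - nngp_B S N)"
proof -
  have "dim_row S = n"
    using S by simp
  moreover have "minv (nngp_F S N) = mat n n (\<lambda>(i, j). if i = j then 1 / nngp_F_entry S N i else 0)"
    unfolding nngp_F_def \<open>dim_row S = n\<close> using F by (rule minv_diag)
  ultimately show ?thesis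
    by (simp add: nngp_Q_def Let_def)
qed

lemma nngp_row_square_le:
  fixes S :: "real mat" and W :: real
  assumes S: "S \<in> carrier_mat n n" and v: "v \<in> carrier_vec n" and l: "l < n"
    and N: "N l \<subseteq> {..<l}" "card (N l) \<le> m" and "0 \<le> W"
    and B_bound: "\<And>j. j < n \<Longrightarrow> (nngp_B S N $$ (l, j))\<^sup>2 \<le> W"
  shows "(((1\<^sub>m n - nngp_B S N) *\<^sub>v v) $ l)\<^sup>2 \<le> (real m + 1) * (1 + W) * ((v $ l)\<^sup>2 + (\<Sum>i\<in>N l. (v $ i)\<^sup>2))"
proof -
  define L where "L = 1\<^sub>m n - nngp_B S N"
  have L: "L \<in> carrier_mat n n"
    unfolding L_def using nngp_B_carrier[OF S] by (rule minus_carrier_mat)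
  have T: "insert l (N l) \<subseteq> {..<n}" "l \<notin> N l" "finite (N l)"
    using N l by (auto intro: finite_subset)
  have "dim_row (nngp_B S N) = n" "dim_col (nngp_B S N) = n"
    using nngp_B_carrier[OF S] by auto
  then have L_entry: "L $$ (l, i) = (if l = i then 1 else 0) - nngp_B S N $$ (l, i)" if "i < n" for i
    using that l by (simp add: L_def)
  have "((L *\<^sub>v v) $ l)\<^sup>2 = (\<Sum>i<n. L $$ (l, i) * v $ i)\<^sup>2"
    using L v l by (simp add: index_mult_mat_vec_sum del: index_mult_mat_vec)
  also have "\<dots> \<le> card (insert l (N l)) * (1 + W) * (\<Sum>i\<in>insert l (N l). (v $ i)\<^sup>2)"
  proof (rule sparse_sum_square_le[OF T(1), where a = "\<lambda>i. L $$ (l, i)" and x = "\<lambda>i. v $ i"])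
    show "L $$ (l, i) = 0" if "i < n" "i \<notin> insert l (N l)" for i
      using that l S by (simp add: L_entry nngp_B_index)
    show "(L $$ (l, i))\<^sup>2 \<le> 1 + W" if "i \<in> insert l (N l)" for i
      using that T B_bound[of i] \<open>0 \<le> W\<close> l S by (auto simp: L_entry nngp_B_index)
  qed
  also have "\<dots> \<le> (real m + 1) * (1 + W) * ((v $ l)\<^sup>2 + (\<Sum>i\<in>N l. (v $ i)\<^sup>2))"
    using T N(2) \<open>0 \<le> W\<close>
    by (auto simp: card_insert_if intro!: mult_right_mono sum_nonneg add_nonneg_nonneg)
  finally show ?thesis
    by (simp add: L_def)
qed

lemma nngp_Q_eigenvalue_le:
  fixes S :: "real mat" and c W :: real
  assumes S: "S \<in> carrier_mat n n" and "c > 0" and "0 \<le> W"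
    and F_lower: "\<And>k. k < n \<Longrightarrow> c \<le> nngp_F_entry S N k"
    and B_bound: "\<And>k j. k < n \<Longrightarrow> j < n \<Longrightarrow> (nngp_B S N $$ (k, j))\<^sup>2 \<le> W"
    and N: "\<And>k. k < n \<Longrightarrow> N k \<subseteq> {..<k}" and card_N: "\<And>k. k < n \<Longrightarrow> card (N k) \<le> m"
    and M: "\<And>j. j < n \<Longrightarrow> card {i. i < n \<and> j \<in> N i} \<le> M"
    and ev: "eigenvalue (nngp_Q S N) e"
  shows "e \<le> (real m + 1) * (1 + W) * (1 + real M) / c"
proof -
  define L where "L = 1\<^sub>m n - nngp_B S N"
  define D where "D = mat n n (\<lambda>(i, j). if i = j then 1 / nngp_F_entry S N i else 0)"
  define K where "K = (real m + 1) * (1 + W)"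
  have L: "L \<in> carrier_mat n n"
    unfolding L_def using nngp_B_carrier[OF S] by (rule minus_carrier_mat)
  have Q: "nngp_Q S N = transpose_mat L * D * L"
    unfolding L_def D_def using S F_lower \<open>c > 0\<close> by (intro nngp_Q_diag_form) force+
  have Q_carrier: "nngp_Q S N \<in> carrier_mat n n"
    unfolding Q D_def using L by (meson mult_carrier_mat transpose_carrier_mat mat_carrier)
  show ?thesis
  proof (rule eigenvalue_le_if_quadratic_form_le[OF Q_carrier ev])
    fix v :: "real vec" assume v: "v \<in> carrier_vec n"
    define V where "V = (\<Sum>i<n. (v $ i)\<^sup>2)"
    have "(\<Sum>l<n. \<Sum>i\<in>N l. (v $ i)\<^sup>2) \<le> M * V"
      unfolding V_def using N M by (intro sum_neighbourhood_sums_le) fastforce+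
    have "(\<Sum>i<n. v $ i * (nngp_Q S N *\<^sub>v v) $ i) = (\<Sum>l<n. ((L *\<^sub>v v) $ l)\<^sup>2 / nngp_F_entry S N l)"
      unfolding Q D_def using quadratic_form_transpose_diag[OF L v] by simp
    also have "\<dots> \<le> (\<Sum>l<n. K * ((v $ l)\<^sup>2 + (\<Sum>i\<in>N l. (v $ i)\<^sup>2)) / c)"
    proof (rule sum_mono)
      fix l assume "l \<in> {..<n}"
      then have l: "l < n"
        by simp
      have "((L *\<^sub>v v) $ l)\<^sup>2 / nngp_F_entry S N l \<le> ((L *\<^sub>v v) $ l)\<^sup>2 / c"
        using F_lower[OF l] \<open>c > 0\<close> by (intro divide_left_mono) auto
      also have "\<dots> \<le> K * ((v $ l)\<^sup>2 + (\<Sum>i\<in>N l. (v $ i)\<^sup>2)) / c"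
        unfolding L_def K_def using nngp_row_square_le[OF S v l N[OF l] card_N[OF l] \<open>0 \<le> W\<close> B_bound[OF l]]
          \<open>c > 0\<close> by (intro divide_right_mono) auto
      finally show "((L *\<^sub>v v) $ l)\<^sup>2 / nngp_F_entry S N l \<le> K * ((v $ l)\<^sup>2 + (\<Sum>i\<in>N l. (v $ i)\<^sup>2)) / c" .
    qed
    also have "\<dots> = K * (V + (\<Sum>l<n. \<Sum>i\<in>N l. (v $ i)\<^sup>2)) / c"
      unfolding V_def by (simp only: sum_divide_distrib[symmetric] sum_distrib_left[symmetric] sum.distrib)
    also have "\<dots> \<le> K * (V + M * V) / c"
      using \<open>(\<Sum>l<n. \<Sum>i\<in>N l. (v $ i)\<^sup>2) \<le> M * V\<close> \<open>c > 0\<close> \<open>0 \<le> W\<close>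
      by (intro divide_right_mono mult_left_mono add_left_mono) (auto simp: K_def)
    also have "\<dots> = (real m + 1) * (1 + W) * (1 + real M) / c * V"
      by (simp add: K_def field_simps)
    finally show "(\<Sum>i<n. v $ i * (nngp_Q S N *\<^sub>v v) $ i) \<le> (real m + 1) * (1 + W) * (1 + real M) / c * V" .
  qed
qed

lemma nngp_Q_eigenvalue_le_coercive:
  fixes S :: "real mat" and c D :: real
  assumes S: "S \<in> carrier_mat n n" and sym: "\<And>i j. i < n \<Longrightarrow> j < n \<Longrightarrow> S $$ (i, j) = S $$ (j, i)"
    and diag: "\<And>i. i < n \<Longrightarrow> S $$ (i, i) \<le> D" and "0 \<le> D"
    and coercive: "principal_submatrices_coercive c (m + 1) S" and "c > 0"
    and N: "\<And>k. k < n \<Longrightarrow> N k \<subseteq> {..<k}" "\<And>k. k < n \<Longrightarrow> card (N k) \<le> m"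
    and M: "\<And>j. j < n \<Longrightarrow> card {i. i < n \<and> j \<in> N i} \<le> M"
    and ev: "eigenvalue (nngp_Q S N) e"
  shows "e \<le> (real m + 1) * (1 + D / c) * (1 + real M) / c"
proof (rule nngp_Q_eigenvalue_le[OF S \<open>c > 0\<close> _ _ _ N M ev])
  define w where "w k a = nngp_w S N k $$ (0, a)" for k a
  have F_bounds: "c * (1 + (\<Sum>a<card (N k). (w k a)\<^sup>2)) \<le> nngp_F_entry S N k"
    "nngp_F_entry S N k \<le> S $$ (k, k)" if "k < n" for k
    using nngp_F_entry_bounds[where N = N, OF S sym coercive \<open>c > 0\<close> that N(1)[OF that] N(2)[OF that]]
    by (simp_all add: w_def)
  have w_nonneg: "0 \<le> (\<Sum>a<card (N k). (w k a)\<^sup>2)" for k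
    by (simp add: sum_nonneg)
  show "0 \<le> D / c"
    using \<open>0 \<le> D\<close> \<open>c > 0\<close> by simp
  show "c \<le> nngp_F_entry S N k" if "k < n" for k
    using F_bounds(1)[OF that] mult_left_mono[OF w_nonneg[of k], of c] \<open>c > 0\<close>
    by (simp add: distrib_left)
  show "(nngp_B S N $$ (k, j))\<^sup>2 \<le> D / c" if k: "k < n" and j: "j < n" for k j
  proof -
    have "c * (1 + (\<Sum>a<card (N k). (w k a)\<^sup>2)) \<le> D"
      using F_bounds[OF k] diag[OF k] by simp
    then have w_bound: "(\<Sum>a<card (N k). (w k a)\<^sup>2) \<le> D / c"
      using \<open>c > 0\<close> by (simp add: field_simps)
    have "(nngp_B S N $$ (k, j))\<^sup>2 \<le> (\<Sum>a<card (N k). (w k a)\<^sup>2)"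
    proof (cases "j \<in> N k")
      case True
      have "finite (N k)"
        using N(1)[OF k] finite_subset by blast
      then have "card {i \<in> N k. i < j} < card (N k)"
        using True by (intro psubset_card_mono) auto
      then show ?thesis
        using True S k j by (auto simp: nngp_B_index w_def intro!: member_le_sum)
    next
      case False
      then show ?thesis
        using S k j w_nonneg by (simp add: nngp_B_index)
    qed
    with w_bound show ?thesis
      by linarith
  qed
qed

lemma Sigma_bar_carrier: "Sigma_bar \<sigma>2 \<phi> \<nu> \<tau>2 n s \<in> carrier_mat n n"
  by (simp add: Sigma_bar_def)

lemma Sigma_bar_index:
  "i < n \<Longrightarrow> j < n \<Longrightarrow>
    Sigma_bar \<sigma>2 \<phi> \<nu> \<tau>2 n s $$ (i, j) = matern \<sigma>2 \<phi> \<nu> (dist (s i) (s j)) + (if i = j then \<tau>2 else 0)"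
  by (simp add: Sigma_bar_def)

lemma Sigma_bar_quadratic_form:
  assumes "T \<subseteq> {..<n}"
  shows "(\<Sum>i\<in>T. \<Sum>j\<in>T. x i * x j * Sigma_bar \<sigma>2 \<phi> \<nu> \<tau>2 n s $$ (i, j)) =
    (\<Sum>i\<in>T. \<Sum>j\<in>T. x i * x j * matern \<sigma>2 \<phi> \<nu> (dist (s i) (s j))) + \<tau>2 * (\<Sum>i\<in>T. (x i)\<^sup>2)"
proof -
  have "finite T"
    using assms by (rule finite_subset) simp
  have "(\<Sum>i\<in>T. \<Sum>j\<in>T. x i * x j * Sigma_bar \<sigma>2 \<phi> \<nu> \<tau>2 n s $$ (i, j)) = (\<Sum>i\<in>T. \<Sum>j\<in>T.
      x i * x j * matern \<sigma>2 \<phi> \<nu> (dist (s i) (s j)) + (if i = j then \<tau>2 * (x i)\<^sup>2 else 0))"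
  proof (intro sum.cong refl)
    fix i j assume "i \<in> T" "j \<in> T"
    then have "i < n" "j < n"
      using assms by auto
    then show "x i * x j * Sigma_bar \<sigma>2 \<phi> \<nu> \<tau>2 n s $$ (i, j) =
        x i * x j * matern \<sigma>2 \<phi> \<nu> (dist (s i) (s j)) + (if i = j then \<tau>2 * (x i)\<^sup>2 else 0)"
      by (simp add: Sigma_bar_index power2_eq_square algebra_simps)
  qed
  also have "\<dots> = (\<Sum>i\<in>T. \<Sum>j\<in>T. x i * x j * matern \<sigma>2 \<phi> \<nu> (dist (s i) (s j))) + \<tau>2 * (\<Sum>i\<in>T. (x i)\<^sup>2)"
    using \<open>finite T\<close> by (simp add: sum.distrib sum_distrib_left)
  finally show ?thesis .
qed

lemma Sigma_bar_coercive:
  fixes h \<sigma>2 \<phi> \<nu> \<tau>2 :: real and q :: nat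
  assumes "h > 0" "\<sigma>2 > 0" "\<phi> > 0" "\<nu> > 0" "\<tau>2 \<ge> 0"
  obtains c where "c > 0"
    and "\<And>n s. (\<forall>i<n. \<forall>j<n. i \<noteq> j \<longrightarrow> h \<le> dist (s i) (s j)) \<Longrightarrow>
      principal_submatrices_coercive c q (Sigma_bar \<sigma>2 \<phi> \<nu> \<tau>2 n s)"
proof (rule matern_coercive_on_separated_points[OF assms(1-4), where m = q])
  fix c :: real
  assume "c > 0" and matern_coercive: "\<And>I (t :: nat \<Rightarrow> real^2) x. finite I \<Longrightarrow> card I \<le> q \<Longrightarrow>
      (\<And>a b. a \<in> I \<Longrightarrow> b \<in> I \<Longrightarrow> a \<noteq> b \<Longrightarrow> h \<le> dist (t a) (t b)) \<Longrightarrow>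
      c * (\<Sum>a\<in>I. (x a)\<^sup>2) \<le> (\<Sum>a\<in>I. \<Sum>b\<in>I. x a * x b * matern \<sigma>2 \<phi> \<nu> (dist (t a) (t b)))"
  have "principal_submatrices_coercive c q (Sigma_bar \<sigma>2 \<phi> \<nu> \<tau>2 n s)"
    if sep: "\<forall>i<n. \<forall>j<n. i \<noteq> j \<longrightarrow> h \<le> dist (s i) (s j)" for n s
    unfolding principal_submatrices_coercive_def
  proof (intro allI impI)
    fix T and x :: "nat \<Rightarrow> real"
    assume T: "T \<subseteq> {..<dim_row (Sigma_bar \<sigma>2 \<phi> \<nu> \<tau>2 n s)}" "card T \<le> q"
    then have T_n: "T \<subseteq> {..<n}"
      by (simp add: Sigma_bar_def)
    then have "finite T"
      by (rule finite_subset) simp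
    have "c * (\<Sum>i\<in>T. (x i)\<^sup>2) \<le> (\<Sum>i\<in>T. \<Sum>j\<in>T. x i * x j * matern \<sigma>2 \<phi> \<nu> (dist (s i) (s j)))"
      using sep T_n by (intro matern_coercive \<open>finite T\<close> T(2)) auto
    also have "\<dots> \<le> (\<Sum>i\<in>T. \<Sum>j\<in>T. x i * x j * Sigma_bar \<sigma>2 \<phi> \<nu> \<tau>2 n s $$ (i, j))"
      unfolding Sigma_bar_quadratic_form[OF T_n] using assms(5) by (simp add: sum_nonneg)
    finally show "c * (\<Sum>i\<in>T. (x i)\<^sup>2) \<le> (\<Sum>i\<in>T. \<Sum>j\<in>T. x i * x j * Sigma_bar \<sigma>2 \<phi> \<nu> \<tau>2 n s $$ (i, j))" .
  qed
  with \<open>c > 0\<close> show thesis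
    using that by blast
qed

theorem lemmaS5:
  fixes h \<sigma>2 \<phi> \<nu> \<tau>2 :: real and m M :: nat
  assumes "h > 0" "\<sigma>2 > 0" "\<phi> > 0" "\<nu> > 0" "\<tau>2 \<ge> 0"
  shows "\<exists>K::real. \<forall>(n::nat) (s::nat \<Rightarrow> real^2) (N::nat \<Rightarrow> nat set).
     (\<forall>i<n. \<forall>j<n. i \<noteq> j \<longrightarrow> dist (s i) (s j) \<ge> h) \<and>
     (\<forall>i<n. N i \<subseteq> {..<i} \<and> card (N i) = min m i \<and>
        (\<forall>j\<in>N i. \<forall>k<i. k \<notin> N i \<longrightarrow> dist (s j) (s i) \<le> dist (s k) (s i))) \<and>
     (\<forall>j<n. card {i. i < n \<and> j \<in> N i} \<le> M)
     \<longrightarrow> (\<forall>ev. eigenvalue (nngp_Q (Sigma_bar \<sigma>2 \<phi> \<nu> \<tau>2 n s) N) ev \<longrightarrow> ev \<le> K)"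
proof -
  obtain c where "c > 0" and coercive: "\<And>n s. (\<forall>i<n. \<forall>j<n. i \<noteq> j \<longrightarrow> h \<le> dist (s i) (s j)) \<Longrightarrow>
      principal_submatrices_coercive c (m + 1) (Sigma_bar \<sigma>2 \<phi> \<nu> \<tau>2 n s)"
    using Sigma_bar_coercive[OF assms] by blast
  show ?thesis
  proof (intro exI allI impI)
    fix n s N e
    assume H: "(\<forall>i<n. \<forall>j<n. i \<noteq> j \<longrightarrow> dist (s i) (s j) \<ge> h) \<and>
     (\<forall>i<n. N i \<subseteq> {..<i} \<and> card (N i) = min m i \<and>
        (\<forall>j\<in>N i. \<forall>k<i. k \<notin> N i \<longrightarrow> dist (s j) (s i) \<le> dist (s k) (s i))) \<and>
     (\<forall>j<n. card {i. i < n \<and> j \<in> N i} \<le> M)"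
      and ev: "eigenvalue (nngp_Q (Sigma_bar \<sigma>2 \<phi> \<nu> \<tau>2 n s) N) e"
    show "e \<le> (real m + 1) * (1 + (\<sigma>2 + \<tau>2) / c) * (1 + real M) / c"
    proof (rule nngp_Q_eigenvalue_le_coercive[OF Sigma_bar_carrier _ _ _ coercive \<open>c > 0\<close> _ _ _ ev])
      show "\<forall>i<n. \<forall>j<n. i \<noteq> j \<longrightarrow> h \<le> dist (s i) (s j)"
        using H by blast
      show "Sigma_bar \<sigma>2 \<phi> \<nu> \<tau>2 n s $$ (i, j) = Sigma_bar \<sigma>2 \<phi> \<nu> \<tau>2 n s $$ (j, i)" if "i < n" "j < n" for i j
        using that by (simp add: Sigma_bar_index dist_commute)
      show "Sigma_bar \<sigma>2 \<phi> \<nu> \<tau>2 n s $$ (i, i) \<le> \<sigma>2 + \<tau>2" if "i < n" for i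
        using that by (simp add: Sigma_bar_index matern_def)
    qed (use H assms in auto)
  qed
qed

end
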